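(* Let $G$ and $H$ be groups and $\varphi\colon G\to \mathrm{Aut}(H)$ an action. Define subgroups of $H$ recursively by $L_1=V_1=H$ and, for $n\geq 2$, $K_n=\langle \varphi(g)(h)h^{-1} : g\in\Gamma_{n-1}(G), h\in H\rangle$, $H_n=\langle \varphi(g)(h)h^{-1} : g\in G, h\in L_{n-1}\rangle$, $\widetilde H_n=\langle \varphi(g)(h)h^{-1} : g\in G, h\in V_{n-1}\rangle$, $L_n=\langle K_n, H_n, [H,L_{n-1}]\rangle$, $V_n=\langle \widetilde H_n, [H,V_{n-1}]\rangle$. Then for every $n\geq 1$, $\varphi$ restricts to an action of $\Gamma_n(G)$ on $L_n$ and of $G^{(n-1)}$ on $V_n$ (by automorphisms), and: (1) $\Gamma_n(H\rtimes_\varphi G)=L_n\rtimes_\varphi \Gamma_n(G)$; (2) $(H\rtimes_\varphi G)^{(n-1)}\subseteq V_n\rtimes_\varphi G^{(n-1)}$.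
   Context: $[x,y]=xyx^{-1}y^{-1}$; for subgroups $A,B$, $[A,B]$ is the subgroup generated by all $[a,b]$. Lower central series: $\Gamma_1(G)=G$, $\Gamma_{i+1}(G)=[\Gamma_i(G),G]$. Derived series: $G^{(0)}=G$, $G^{(i+1)}=[G^{(i)},G^{(i)}]$. In $H\rtimes_\varphi G$ the product is $(h,g)(h',g')=(h\,\varphi(g)(h'),gg')$. *)

theory Defs
  imports "HOL-Algebra.Algebra"
begin

definition comm_subgroup :: "('a, 'b) monoid_scheme \<Rightarrow> 'a set \<Rightarrow> 'a set \<Rightarrow> 'a set" where
  "comm_subgroup G A B = generate G (\<Union>a \<in> A. \<Union>b \<in> B.
      {a \<otimes>\<^bsub>G\<^esub> b \<otimes>\<^bsub>G\<^esub> inv\<^bsub>G\<^esub> a \<otimes>\<^bsub>G\<^esub> inv\<^bsub>G\<^esub> b})"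

text \<open>Lower central series, indexed from 1 (index 0 is a junk value).\<close>
fun lcs :: "('a, 'b) monoid_scheme \<Rightarrow> nat \<Rightarrow> 'a set" where
  "lcs G 0 = carrier G"
| "lcs G (Suc 0) = carrier G"
| "lcs G (Suc (Suc n)) = comm_subgroup G (lcs G (Suc n)) (carrier G)"

text \<open>Derived series G^(i), indexed from 0, using the library's derived subgroup.\<close>
definition derived_series :: "('a, 'b) monoid_scheme \<Rightarrow> nat \<Rightarrow> 'a set" where
  "derived_series G i = (derived G ^^ i) (carrier G)"

definition semidirect :: "('a, 'c) monoid_scheme \<Rightarrow> ('b, 'd) monoid_scheme
    \<Rightarrow> ('b \<Rightarrow> 'a \<Rightarrow> 'a) \<Rightarrow> ('a \<times> 'b) monoid" where
  "semidirect H G \<phi> =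
     \<lparr> carrier = carrier H \<times> carrier G,
       Group.monoid.mult = (\<lambda>(h, g) (h', g'). (h \<otimes>\<^bsub>H\<^esub> \<phi> g h', g \<otimes>\<^bsub>G\<^esub> g')),
       one = (\<one>\<^bsub>H\<^esub>, \<one>\<^bsub>G\<^esub>) \<rparr>"

definition twist_subgroup :: "('a, 'c) monoid_scheme \<Rightarrow> ('b \<Rightarrow> 'a \<Rightarrow> 'a) \<Rightarrow> 'b set \<Rightarrow> 'a set \<Rightarrow> 'a set" where
  "twist_subgroup H \<phi> A B = generate H (\<Union>g \<in> A. \<Union>h \<in> B. {\<phi> g h \<otimes>\<^bsub>H\<^esub> inv\<^bsub>H\<^esub> h})"

text \<open>The subgroups L_n (indexed from 1; index 0 junk).
  K_n = twist G-part over \<Gamma>_{n-1}(G) and H; H_n = twist over G and L_{n-1};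
  L_n = \<langle>K_n, H_n, [H, L_{n-1}]\<rangle>.\<close>
fun Lser :: "('b, 'd) monoid_scheme \<Rightarrow> ('a, 'c) monoid_scheme \<Rightarrow> ('b \<Rightarrow> 'a \<Rightarrow> 'a) \<Rightarrow> nat \<Rightarrow> 'a set" where
  "Lser G H \<phi> 0 = carrier H"
| "Lser G H \<phi> (Suc 0) = carrier H"
| "Lser G H \<phi> (Suc (Suc n)) =
     generate H (twist_subgroup H \<phi> (lcs G (Suc n)) (carrier H)
               \<union> twist_subgroup H \<phi> (carrier G) (Lser G H \<phi> (Suc n))
               \<union> comm_subgroup H (carrier H) (Lser G H \<phi> (Suc n)))"

text \<open>The subgroups V_n (indexed from 1; index 0 junk):
  V_n = \<langle>\<tilde>H_n, [H, V_{n-1}]\<rangle>, \<tilde>H_n = twist over G and V_{n-1}.\<close>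
fun Vser :: "('b, 'd) monoid_scheme \<Rightarrow> ('a, 'c) monoid_scheme \<Rightarrow> ('b \<Rightarrow> 'a \<Rightarrow> 'a) \<Rightarrow> nat \<Rightarrow> 'a set" where
  "Vser G H \<phi> 0 = carrier H"
| "Vser G H \<phi> (Suc 0) = carrier H"
| "Vser G H \<phi> (Suc (Suc n)) =
     generate H (twist_subgroup H \<phi> (carrier G) (Vser G H \<phi> (Suc n))
               \<union> comm_subgroup H (carrier H) (Vser G H \<phi> (Suc n)))"

end

theory Submission
  imports Defs
begin

text \<open>
  For subgroups A \<rtimes> B and A' \<rtimes> B' of P = H \<rtimes> G, the commutators of the generators (a, 1) and
  (1, b) are ([a, a'], 1), (\<phi>(b)(a') a'\<inverse>, 1), the inverse of (\<phi>(b')(a) a\<inverse>, 1), and (1, [b, b']).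
  Hence [A \<rtimes> B, A' \<rtimes> B'] contains M \<rtimes> [B, B'], where M is generated by these twists and [A, A'],
  and it is contained in every M' \<rtimes> C that contains the generator commutators and is normalized
  by both factors.  For L_n \<rtimes> \<Gamma>_n(G) and H \<rtimes> G both bounds are L_(n+1) \<rtimes> \<Gamma>_(n+1)(G), which
  gives (1) by induction; for two copies of V_n \<rtimes> G^(n-1) the upper bound gives (2).  The
  normalization holds because every L_n and V_n is a \<phi>(G)-invariant normal subgroup of H, which is
  also what makes \<phi> restrict to actions on them.
\<close>

lemma (in group_hom) image_generate_subset:
  assumes "R \<subseteq> carrier G" and "subgroup S H" and "h ` R \<subseteq> S"
  shows "h ` generate G R \<subseteq> S"
  using H.generate_subgroup_incl[OF assms(3,2)] by (simp add: generate_img[OF assms(1)])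

lemma (in group_hom) subgroup_vimage:
  assumes "subgroup S H"
  shows "subgroup {x \<in> carrier G. h x \<in> S} G"
proof
  show "\<one> \<in> {x \<in> carrier G. h x \<in> S}" using subgroup.one_closed[OF assms] by simp
  fix x y
  assume "x \<in> {x \<in> carrier G. h x \<in> S}" "y \<in> {x \<in> carrier G. h x \<in> S}"
  then show "x \<otimes> y \<in> {x \<in> carrier G. h x \<in> S}" "inv x \<in> {x \<in> carrier G. h x \<in> S}"
    using subgroup.m_closed[OF assms] subgroup.m_inv_closed[OF assms] by auto
qed auto

lemma normal_subset: "N \<lhd> G \<Longrightarrow> N \<subseteq> carrier G"
  using normal_imp_subgroup subgroup.subset by blast

lemma derived_series_Suc:
  "derived_series G (Suc k) = comm_subgroup G (derived_series G k) (derived_series G k)"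
  by (simp add: derived_series_def derived_def comm_subgroup_def)

lemma twist_subgroup_incl: "g \<in> A \<Longrightarrow> h \<in> B \<Longrightarrow> \<phi> g h \<otimes>\<^bsub>H\<^esub> inv\<^bsub>H\<^esub> h \<in> twist_subgroup H \<phi> A B"
  unfolding twist_subgroup_def by (rule generate.incl) blast

lemma comm_subgroup_incl:
  "a \<in> A \<Longrightarrow> b \<in> B \<Longrightarrow> a \<otimes>\<^bsub>G\<^esub> b \<otimes>\<^bsub>G\<^esub> inv\<^bsub>G\<^esub> a \<otimes>\<^bsub>G\<^esub> inv\<^bsub>G\<^esub> b \<in> comm_subgroup G A B"
  unfolding comm_subgroup_def by (rule generate.incl) blast

context group
begin

lemma inv_mult_cancel [simp]: "x \<in> carrier G \<Longrightarrow> y \<in> carrier G \<Longrightarrow> inv x \<otimes> (x \<otimes> y) = y"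
  by (simp add: m_assoc[symmetric])

lemma mult_inv_cancel [simp]: "x \<in> carrier G \<Longrightarrow> y \<in> carrier G \<Longrightarrow> x \<otimes> (inv x \<otimes> y) = y"
  by (simp add: m_assoc[symmetric])

lemma inv_commutator:
  "x \<in> carrier G \<Longrightarrow> y \<in> carrier G \<Longrightarrow> inv (x \<otimes> y \<otimes> inv x \<otimes> inv y) = y \<otimes> x \<otimes> inv y \<otimes> inv x"
  by (simp add: inv_mult_group m_assoc)

lemma conj_hom: "g \<in> carrier G \<Longrightarrow> (\<lambda>x. g \<otimes> x \<otimes> inv g) \<in> hom G G"
  by (rule homI) (simp_all add: m_assoc)

lemma normal_generate_of_conj_subset:
  assumes "R \<subseteq> carrier G" and "\<And>g. g \<in> carrier G \<Longrightarrow> (\<lambda>x. g \<otimes> x \<otimes> inv g) ` R \<subseteq> generate G R"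
  shows "generate G R \<lhd> G"
proof -
  have "(\<lambda>x. g \<otimes> x \<otimes> inv g) ` generate G R \<subseteq> generate G R" if "g \<in> carrier G" for g
    using group_hom.image_generate_subset[OF _ assms(1) generate_is_subgroup[OF assms(1)] assms(2)[OF that]]
      conj_hom[OF that] group_axioms by (simp add: group_hom_def group_hom_axioms_def)
  then show ?thesis
    using generate_is_subgroup[OF assms(1)] by (auto simp: normal_inv_iff)
qed

lemma generate_insert_one: "R \<subseteq> carrier G \<Longrightarrow> generate G (insert \<one> R) = generate G R"
  by (intro equalityI generate_subgroup_incl generate_is_subgroup mono_generate)
    (auto intro: generate.one generate.incl)

lemma comm_subgroup_is_subgroup:
  "A \<subseteq> carrier G \<Longrightarrow> B \<subseteq> carrier G \<Longrightarrow> subgroup (comm_subgroup G A B) G"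
  unfolding comm_subgroup_def by (rule generate_is_subgroup) (blast intro: m_closed inv_closed)

lemma comm_subgroup_subset_normal:
  assumes "L \<lhd> G"
  shows "comm_subgroup G (carrier G) L \<subseteq> L"
proof -
  interpret L: normal L G by (rule assms)
  have "a \<otimes> b \<otimes> inv a \<otimes> inv b \<in> L" if "a \<in> carrier G" "b \<in> L" for a b
    using L.m_closed[OF L.inv_op_closed2[OF that] L.m_inv_closed[OF that(2)]] .
  then show ?thesis
    unfolding comm_subgroup_def by (intro generate_subgroup_incl L.subgroup_axioms) blast
qed

lemma comm_subgroup_mono: "A \<subseteq> A' \<Longrightarrow> B \<subseteq> B' \<Longrightarrow> comm_subgroup G A B \<subseteq> comm_subgroup G A' B'"
  unfolding comm_subgroup_def by (rule mono_generate) blast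

lemma comm_subgroup_commute:
  assumes "A \<subseteq> carrier G" and "B \<subseteq> carrier G"
  shows "comm_subgroup G A B = comm_subgroup G B A"
proof -
  have "comm_subgroup G R S \<subseteq> comm_subgroup G S R" if R: "R \<subseteq> carrier G" and S: "S \<subseteq> carrier G" for R S
  proof -
    have "x \<otimes> y \<otimes> inv x \<otimes> inv y \<in> comm_subgroup G S R" if "x \<in> R" "y \<in> S" for x y
    proof -
      have "x \<in> carrier G" "y \<in> carrier G" using that R S by auto
      then show ?thesis
        using subgroup.m_inv_closed[OF comm_subgroup_is_subgroup[OF S R] comm_subgroup_incl[OF that(2,1)]]
        by (simp add: inv_commutator)
    qed
    then show ?thesis
      unfolding comm_subgroup_def[of G R S]
      by (intro generate_subgroup_incl comm_subgroup_is_subgroup[OF S R]) blast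
  qed
  then show ?thesis using assms by blast
qed

lemma commutator_generate_closed:
  assumes R: "R \<subseteq> carrier G" and N: "subgroup N G"
    and normalizes: "\<And>x n. x \<in> generate G R \<Longrightarrow> n \<in> N \<Longrightarrow> x \<otimes> n \<otimes> inv x \<in> N"
    and b: "b \<in> carrier G"
    and gens: "\<And>a. a \<in> R \<Longrightarrow> a \<otimes> b \<otimes> inv a \<otimes> inv b \<in> N"
    and x: "x \<in> generate G R"
  shows "x \<otimes> b \<otimes> inv x \<otimes> inv b \<in> N"
  using x
proof (induction rule: generate.induct)
  case one
  then show ?case using b subgroup.one_closed[OF N] by simp
next
  case (incl a)
  then show ?case by (rule gens)
next
  case (inv a)
  have a: "a \<in> carrier G" using inv R by blast
  have "inv a \<otimes> inv (a \<otimes> b \<otimes> inv a \<otimes> inv b) \<otimes> inv (inv a) \<in> N"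
    using inv by (intro normalizes generate.inv subgroup.m_inv_closed[OF N] gens)
  also have "inv a \<otimes> inv (a \<otimes> b \<otimes> inv a \<otimes> inv b) \<otimes> inv (inv a) = inv a \<otimes> b \<otimes> inv (inv a) \<otimes> inv b"
    using a b by (simp add: inv_mult_group m_assoc)
  finally show ?case .
next
  case (eng x y)
  have xy: "x \<in> carrier G" "y \<in> carrier G" using eng.hyps generate_in_carrier[OF R] by blast+
  have "x \<otimes> (y \<otimes> b \<otimes> inv y \<otimes> inv b) \<otimes> inv x \<otimes> (x \<otimes> b \<otimes> inv x \<otimes> inv b) \<in> N"
    by (rule subgroup.m_closed[OF N normalizes[OF eng.hyps(1) eng.IH(2)] eng.IH(1)])
  also have "x \<otimes> (y \<otimes> b \<otimes> inv y \<otimes> inv b) \<otimes> inv x \<otimes> (x \<otimes> b \<otimes> inv x \<otimes> inv b)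
     = x \<otimes> y \<otimes> b \<otimes> inv (x \<otimes> y) \<otimes> inv b"
    using xy b by (simp add: inv_mult_group m_assoc)
  finally show ?case .
qed

lemma comm_subgroup_generate_subset:
  assumes R: "R \<subseteq> carrier G" and S: "S \<subseteq> carrier G" and N: "subgroup N G"
    and normR: "\<And>x n. x \<in> generate G R \<Longrightarrow> n \<in> N \<Longrightarrow> x \<otimes> n \<otimes> inv x \<in> N"
    and normS: "\<And>y n. y \<in> generate G S \<Longrightarrow> n \<in> N \<Longrightarrow> y \<otimes> n \<otimes> inv y \<in> N"
    and gens: "\<And>a b. a \<in> R \<Longrightarrow> b \<in> S \<Longrightarrow> a \<otimes> b \<otimes> inv a \<otimes> inv b \<in> N"
  shows "comm_subgroup G (generate G R) (generate G S) \<subseteq> N"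
proof -
  have swap: "y \<otimes> x \<otimes> inv y \<otimes> inv x \<in> N"
    if "x \<otimes> y \<otimes> inv x \<otimes> inv y \<in> N" "x \<in> carrier G" "y \<in> carrier G" for x y
    using subgroup.m_inv_closed[OF N that(1)] inv_commutator[OF that(2,3)] by simp
  have "x \<otimes> y \<otimes> inv x \<otimes> inv y \<in> N" if x: "x \<in> generate G R" and y: "y \<in> generate G S" for x y
  proof -
    have xc: "x \<in> carrier G" and yc: "y \<in> carrier G"
      using generate_in_carrier R S x y by blast+
    have x_gens: "b \<otimes> x \<otimes> inv b \<otimes> inv x \<in> N" if b: "b \<in> S" for b
    proof -
      have bc: "b \<in> carrier G" using b S by blast
      have "x \<otimes> b \<otimes> inv x \<otimes> inv b \<in> N"
        by (rule commutator_generate_closed[OF R N normR bc gens[OF _ b] x])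
      then show ?thesis using swap xc bc by blast
    qed
    have "y \<otimes> x \<otimes> inv y \<otimes> inv x \<in> N"
      by (rule commutator_generate_closed[OF S N normS xc x_gens y])
    then show ?thesis using swap yc xc by blast
  qed
  then show ?thesis
    unfolding comm_subgroup_def by (intro generate_subgroup_incl[OF _ N]) blast
qed

lemma lcs_normal: "lcs G (Suc n) \<lhd> G"
proof (induction n)
  case 0
  then show ?case by (simp add: normal_self)
next
  case (Suc n)
  interpret L: normal "lcs G (Suc n)" G by (rule Suc)
  have conj_commutator: "g \<otimes> (a \<otimes> b \<otimes> inv a \<otimes> inv b) \<otimes> inv g =
      (g \<otimes> a \<otimes> inv g) \<otimes> (g \<otimes> b \<otimes> inv g) \<otimes> inv (g \<otimes> a \<otimes> inv g) \<otimes> inv (g \<otimes> b \<otimes> inv g)"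
    if "g \<in> carrier G" "a \<in> carrier G" "b \<in> carrier G" for g a b
    using that by (simp add: inv_mult_group m_assoc)
  show ?case
    unfolding lcs.simps comm_subgroup_def
  proof (rule normal_generateI)
    show "(\<Union>a\<in>lcs G (Suc n). \<Union>b\<in>carrier G. {a \<otimes> b \<otimes> inv a \<otimes> inv b}) \<subseteq> carrier G"
      using L.subset by blast
  next
    fix c g
    assume "c \<in> (\<Union>a\<in>lcs G (Suc n). \<Union>b\<in>carrier G. {a \<otimes> b \<otimes> inv a \<otimes> inv b})" and g: "g \<in> carrier G"
    then obtain a b where ab: "a \<in> lcs G (Suc n)" "b \<in> carrier G" and c: "c = a \<otimes> b \<otimes> inv a \<otimes> inv b"
      by blast
    have "g \<otimes> a \<otimes> inv g \<in> lcs G (Suc n)" "g \<otimes> b \<otimes> inv g \<in> carrier G"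
      using L.inv_op_closed2 g ab by auto
    then show "g \<otimes> c \<otimes> inv g \<in> (\<Union>a\<in>lcs G (Suc n). \<Union>b\<in>carrier G. {a \<otimes> b \<otimes> inv a \<otimes> inv b})"
      unfolding c conj_commutator[OF g L.mem_carrier[OF ab(1)] ab(2)] by blast
  qed
qed

lemma lcs_Suc_subset: "lcs G (Suc (Suc n)) \<subseteq> lcs G (Suc n)"
proof -
  interpret L: normal "lcs G (Suc n)" G by (rule lcs_normal)
  have "a \<otimes> b \<otimes> inv a \<otimes> inv b \<in> lcs G (Suc n)" if "a \<in> lcs G (Suc n)" "b \<in> carrier G" for a b
    using that L.m_closed[OF that(1) L.inv_op_closed2[OF that(2) L.m_inv_closed]] by (simp add: m_assoc)
  then show ?thesis
    unfolding lcs.simps comm_subgroup_def by (intro generate_subgroup_incl L.subgroup_axioms) blast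
qed

lemma derived_series_normal: "derived_series G k \<lhd> G"
  by (induction k) (simp_all add: derived_series_def normal_self derived_is_normal)

end

locale aut_action = G: group G + H: group H
  for G :: "('b, 'd) monoid_scheme" and H :: "('a, 'c) monoid_scheme" and \<phi> :: "'b \<Rightarrow> 'a \<Rightarrow> 'a"
  + assumes action: "\<phi> \<in> hom G (AutoGroup H)"
begin

lemma action_auto: "g \<in> carrier G \<Longrightarrow> \<phi> g \<in> auto H"
  using action by (auto simp: hom_def AutoGroup_def)

lemma action_group_hom: "g \<in> carrier G \<Longrightarrow> group_hom H H (\<phi> g)"
  using action_auto by unfold_locales (auto simp: auto_def)

lemma action_closed [simp]: "g \<in> carrier G \<Longrightarrow> h \<in> carrier H \<Longrightarrow> \<phi> g h \<in> carrier H"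
  using group_hom.hom_closed[OF action_group_hom] .

lemma action_mult [simp]:
  "g \<in> carrier G \<Longrightarrow> h \<in> carrier H \<Longrightarrow> k \<in> carrier H \<Longrightarrow> \<phi> g (h \<otimes>\<^bsub>H\<^esub> k) = \<phi> g h \<otimes>\<^bsub>H\<^esub> \<phi> g k"
  using group_hom.hom_mult[OF action_group_hom] .

lemma action_one [simp]: "g \<in> carrier G \<Longrightarrow> \<phi> g \<one>\<^bsub>H\<^esub> = \<one>\<^bsub>H\<^esub>"
  using group_hom.hom_one[OF action_group_hom] .

lemma action_inv [simp]:
  "g \<in> carrier G \<Longrightarrow> h \<in> carrier H \<Longrightarrow> \<phi> g (inv\<^bsub>H\<^esub> h) = inv\<^bsub>H\<^esub> (\<phi> g h)"
  using group_hom.hom_inv[OF action_group_hom] .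

lemma action_compose [simp]:
  assumes "g \<in> carrier G" and "g' \<in> carrier G" and "h \<in> carrier H"
  shows "\<phi> (g \<otimes>\<^bsub>G\<^esub> g') h = \<phi> g (\<phi> g' h)"
proof -
  have "\<phi> (g \<otimes>\<^bsub>G\<^esub> g') = \<phi> g \<otimes>\<^bsub>AutoGroup H\<^esub> \<phi> g'"
    using hom_mult[OF action assms(1,2)] .
  then show ?thesis
    using assms action_auto by (simp add: auto_def AutoGroup_def BijGroup_def compose_def)
qed

lemma action_unit [simp]: "h \<in> carrier H \<Longrightarrow> \<phi> \<one>\<^bsub>G\<^esub> h = h"
  using group_hom.hom_one[of G "AutoGroup H" \<phi>] H.AutoGroup action
  by (simp add: group_hom_def group_hom_axioms_def AutoGroup_def BijGroup_def)

lemma action_inv_cancel [simp]: "g \<in> carrier G \<Longrightarrow> h \<in> carrier H \<Longrightarrow> \<phi> (inv\<^bsub>G\<^esub> g) (\<phi> g h) = h"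
  using action_compose[of "inv\<^bsub>G\<^esub> g" g h] by simp

lemma action_cancel_inv [simp]: "g \<in> carrier G \<Longrightarrow> h \<in> carrier H \<Longrightarrow> \<phi> g (\<phi> (inv\<^bsub>G\<^esub> g) h) = h"
  using action_compose[of g "inv\<^bsub>G\<^esub> g" h] by simp

abbreviation P where "P \<equiv> semidirect H G \<phi>"

lemma semidirect_carrier [simp]: "carrier P = carrier H \<times> carrier G"
  by (simp add: semidirect_def)

lemma semidirect_mult [simp]: "(h, g) \<otimes>\<^bsub>P\<^esub> (h', g') = (h \<otimes>\<^bsub>H\<^esub> \<phi> g h', g \<otimes>\<^bsub>G\<^esub> g')"
  by (simp add: semidirect_def)

lemma semidirect_one [simp]: "\<one>\<^bsub>P\<^esub> = (\<one>\<^bsub>H\<^esub>, \<one>\<^bsub>G\<^esub>)"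
  by (simp add: semidirect_def)

lemma semidirect_group: "group P"
proof (rule groupI)
  fix x y z
  assume "x \<in> carrier P" "y \<in> carrier P" "z \<in> carrier P"
  then show "x \<otimes>\<^bsub>P\<^esub> y \<otimes>\<^bsub>P\<^esub> z = x \<otimes>\<^bsub>P\<^esub> (y \<otimes>\<^bsub>P\<^esub> z)"
    by (cases x; cases y; cases z) (auto simp: H.m_assoc G.m_assoc)
next
  fix x
  assume "x \<in> carrier P"
  then obtain h g where x: "x = (h, g)" and hg: "h \<in> carrier H" "g \<in> carrier G" by auto
  have "(\<phi> (inv\<^bsub>G\<^esub> g) (inv\<^bsub>H\<^esub> h), inv\<^bsub>G\<^esub> g) \<otimes>\<^bsub>P\<^esub> (h, g) = \<one>\<^bsub>P\<^esub>"
    using hg by (simp flip: action_mult)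
  moreover have "(\<phi> (inv\<^bsub>G\<^esub> g) (inv\<^bsub>H\<^esub> h), inv\<^bsub>G\<^esub> g) \<in> carrier P" using hg by simp
  ultimately show "\<exists>y\<in>carrier P. y \<otimes>\<^bsub>P\<^esub> x = \<one>\<^bsub>P\<^esub>"
    unfolding x by blast
qed auto

lemma semidirect_inv [simp]:
  "h \<in> carrier H \<Longrightarrow> g \<in> carrier G \<Longrightarrow> inv\<^bsub>P\<^esub> (h, g) = (\<phi> (inv\<^bsub>G\<^esub> g) (inv\<^bsub>H\<^esub> h), inv\<^bsub>G\<^esub> g)"
  by (rule group.inv_equality[OF semidirect_group]) auto

lemma semidirect_inv_fst: "h \<in> carrier H \<Longrightarrow> inv\<^bsub>P\<^esub> (h, \<one>\<^bsub>G\<^esub>) = (inv\<^bsub>H\<^esub> h, \<one>\<^bsub>G\<^esub>)"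
  by simp

lemma semidirect_conj:
  assumes "h \<in> carrier H" "g \<in> carrier G" "l \<in> carrier H" "c \<in> carrier G"
  shows "(h, g) \<otimes>\<^bsub>P\<^esub> (l, c) \<otimes>\<^bsub>P\<^esub> inv\<^bsub>P\<^esub> (h, g)
    = ((h \<otimes>\<^bsub>H\<^esub> \<phi> g l \<otimes>\<^bsub>H\<^esub> inv\<^bsub>H\<^esub> h) \<otimes>\<^bsub>H\<^esub>
         inv\<^bsub>H\<^esub> (\<phi> (g \<otimes>\<^bsub>G\<^esub> c \<otimes>\<^bsub>G\<^esub> inv\<^bsub>G\<^esub> g) h \<otimes>\<^bsub>H\<^esub> inv\<^bsub>H\<^esub> h),
       g \<otimes>\<^bsub>G\<^esub> c \<otimes>\<^bsub>G\<^esub> inv\<^bsub>G\<^esub> g)"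
  using assms by (simp add: H.inv_mult_group H.m_assoc G.m_assoc)

lemma semidirect_commutator_HH:
  "a \<in> carrier H \<Longrightarrow> a' \<in> carrier H \<Longrightarrow>
    (a, \<one>\<^bsub>G\<^esub>) \<otimes>\<^bsub>P\<^esub> (a', \<one>\<^bsub>G\<^esub>) \<otimes>\<^bsub>P\<^esub> inv\<^bsub>P\<^esub> (a, \<one>\<^bsub>G\<^esub>) \<otimes>\<^bsub>P\<^esub> inv\<^bsub>P\<^esub> (a', \<one>\<^bsub>G\<^esub>)
      = (a \<otimes>\<^bsub>H\<^esub> a' \<otimes>\<^bsub>H\<^esub> inv\<^bsub>H\<^esub> a \<otimes>\<^bsub>H\<^esub> inv\<^bsub>H\<^esub> a', \<one>\<^bsub>G\<^esub>)"
  by simp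

lemma semidirect_commutator_HG:
  "a \<in> carrier H \<Longrightarrow> b \<in> carrier G \<Longrightarrow>
    (a, \<one>\<^bsub>G\<^esub>) \<otimes>\<^bsub>P\<^esub> (\<one>\<^bsub>H\<^esub>, b) \<otimes>\<^bsub>P\<^esub> inv\<^bsub>P\<^esub> (a, \<one>\<^bsub>G\<^esub>) \<otimes>\<^bsub>P\<^esub> inv\<^bsub>P\<^esub> (\<one>\<^bsub>H\<^esub>, b)
      = (inv\<^bsub>H\<^esub> (\<phi> b a \<otimes>\<^bsub>H\<^esub> inv\<^bsub>H\<^esub> a), \<one>\<^bsub>G\<^esub>)"
  by (simp add: H.inv_mult_group)

lemma semidirect_commutator_GH:
  "b \<in> carrier G \<Longrightarrow> a \<in> carrier H \<Longrightarrow>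
    (\<one>\<^bsub>H\<^esub>, b) \<otimes>\<^bsub>P\<^esub> (a, \<one>\<^bsub>G\<^esub>) \<otimes>\<^bsub>P\<^esub> inv\<^bsub>P\<^esub> (\<one>\<^bsub>H\<^esub>, b) \<otimes>\<^bsub>P\<^esub> inv\<^bsub>P\<^esub> (a, \<one>\<^bsub>G\<^esub>)
      = (\<phi> b a \<otimes>\<^bsub>H\<^esub> inv\<^bsub>H\<^esub> a, \<one>\<^bsub>G\<^esub>)"
  by simp

lemma semidirect_commutator_GG:
  "b \<in> carrier G \<Longrightarrow> b' \<in> carrier G \<Longrightarrow>
    (\<one>\<^bsub>H\<^esub>, b) \<otimes>\<^bsub>P\<^esub> (\<one>\<^bsub>H\<^esub>, b') \<otimes>\<^bsub>P\<^esub> inv\<^bsub>P\<^esub> (\<one>\<^bsub>H\<^esub>, b) \<otimes>\<^bsub>P\<^esub> inv\<^bsub>P\<^esub> (\<one>\<^bsub>H\<^esub>, b')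
      = (\<one>\<^bsub>H\<^esub>, b \<otimes>\<^bsub>G\<^esub> b' \<otimes>\<^bsub>G\<^esub> inv\<^bsub>G\<^esub> b \<otimes>\<^bsub>G\<^esub> inv\<^bsub>G\<^esub> b')"
  by simp

lemma fst_embedding_hom: "group_hom H P (\<lambda>a. (a, \<one>\<^bsub>G\<^esub>))"
  unfolding group_hom_def group_hom_axioms_def using H.group_axioms semidirect_group
  by (auto intro: homI)

lemma snd_embedding_hom: "group_hom G P (\<lambda>b. (\<one>\<^bsub>H\<^esub>, b))"
  unfolding group_hom_def group_hom_axioms_def using G.group_axioms semidirect_group
  by (auto intro: homI)

lemma subgroup_product:
  assumes A: "subgroup A H" and B: "subgroup B G" and stable: "\<And>b a. b \<in> B \<Longrightarrow> a \<in> A \<Longrightarrow> \<phi> b a \<in> A"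
  shows "subgroup (A \<times> B) P"
proof -
  have AC: "A \<subseteq> carrier H" and BC: "B \<subseteq> carrier G" using A B subgroup.subset by blast+
  show ?thesis
  proof
    show "A \<times> B \<subseteq> carrier P" using AC BC by auto
    show "\<one>\<^bsub>P\<^esub> \<in> A \<times> B" using subgroup.one_closed[OF A] subgroup.one_closed[OF B] by simp
  next
    fix x y
    assume "x \<in> A \<times> B" "y \<in> A \<times> B"
    then show "x \<otimes>\<^bsub>P\<^esub> y \<in> A \<times> B"
      using stable subgroup.m_closed[OF A] subgroup.m_closed[OF B] by (cases x; cases y) auto
  next
    fix x
    assume "x \<in> A \<times> B"
    then obtain a b where x: "x = (a, b)" "a \<in> A" "b \<in> B" by auto
    moreover have "a \<in> carrier H" "b \<in> carrier G" using x AC BC by auto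
    ultimately show "inv\<^bsub>P\<^esub> x \<in> A \<times> B"
      using stable subgroup.m_inv_closed[OF A] subgroup.m_inv_closed[OF B] by simp
  qed
qed

lemma subgroup_productD:
  assumes "subgroup (A \<times> B) P"
  shows "A \<subseteq> carrier H" and "B \<subseteq> carrier G" and "\<one>\<^bsub>H\<^esub> \<in> A" and "\<one>\<^bsub>G\<^esub> \<in> B"
proof -
  have "(\<one>\<^bsub>H\<^esub>, \<one>\<^bsub>G\<^esub>) \<in> A \<times> B" using subgroup.one_closed[OF assms] by simp
  moreover have "A \<times> B \<subseteq> carrier H \<times> carrier G" using subgroup.subset[OF assms] by simp
  ultimately show "A \<subseteq> carrier H" "B \<subseteq> carrier G" "\<one>\<^bsub>H\<^esub> \<in> A" "\<one>\<^bsub>G\<^esub> \<in> B" by auto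
qed

lemma product_eq_generate:
  assumes "subgroup (A \<times> B) P"
  shows "A \<times> B = generate P ((\<lambda>a. (a, \<one>\<^bsub>G\<^esub>)) ` A \<union> (\<lambda>b. (\<one>\<^bsub>H\<^esub>, b)) ` B)"
proof
  note carrier = subgroup_productD[OF assms]
  show "generate P ((\<lambda>a. (a, \<one>\<^bsub>G\<^esub>)) ` A \<union> (\<lambda>b. (\<one>\<^bsub>H\<^esub>, b)) ` B) \<subseteq> A \<times> B"
    using carrier by (intro group.generate_subgroup_incl[OF semidirect_group _ assms]) auto
  show "A \<times> B \<subseteq> generate P ((\<lambda>a. (a, \<one>\<^bsub>G\<^esub>)) ` A \<union> (\<lambda>b. (\<one>\<^bsub>H\<^esub>, b)) ` B)"
  proof safe
    fix a b
    assume ab: "a \<in> A" "b \<in> B"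
    then have "(a, \<one>\<^bsub>G\<^esub>) \<otimes>\<^bsub>P\<^esub> (\<one>\<^bsub>H\<^esub>, b) \<in> generate P ((\<lambda>a. (a, \<one>\<^bsub>G\<^esub>)) ` A \<union> (\<lambda>b. (\<one>\<^bsub>H\<^esub>, b)) ` B)"
      by (blast intro: generate.eng generate.incl)
    moreover have "a \<in> carrier H" "b \<in> carrier G" using ab carrier by auto
    ultimately show "(a, b) \<in> generate P ((\<lambda>a. (a, \<one>\<^bsub>G\<^esub>)) ` A \<union> (\<lambda>b. (\<one>\<^bsub>H\<^esub>, b)) ` B)"
      by simp
  qed
qed

definition stable_normal :: "'a set \<Rightarrow> bool" where
  "stable_normal S \<longleftrightarrow> S \<lhd> H \<and> (\<forall>g\<in>carrier G. \<phi> g ` S \<subseteq> S)"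

lemma stable_normal_carrier: "stable_normal (carrier H)"
  by (auto simp: stable_normal_def H.normal_self)

lemma stable_normal_subset: "stable_normal S \<Longrightarrow> S \<subseteq> carrier H"
  unfolding stable_normal_def using normal_imp_subgroup subgroup.subset by blast

lemma stable_normal_action: "stable_normal S \<Longrightarrow> g \<in> carrier G \<Longrightarrow> s \<in> S \<Longrightarrow> \<phi> g s \<in> S"
  unfolding stable_normal_def by blast

lemma stable_normal_bij_betw:
  assumes S: "stable_normal S" and g: "g \<in> carrier G"
  shows "bij_betw (\<phi> g) S S"
proof (rule bij_betw_byWitness[where f' = "\<phi> (inv\<^bsub>G\<^esub> g)"])
  have "S \<subseteq> carrier H" and stable: "\<And>x. x \<in> carrier G \<Longrightarrow> \<phi> x ` S \<subseteq> S"
    using S normal_imp_subgroup subgroup.subset unfolding stable_normal_def by blast+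
  then show "\<forall>h\<in>S. \<phi> (inv\<^bsub>G\<^esub> g) (\<phi> g h) = h" "\<forall>h\<in>S. \<phi> g (\<phi> (inv\<^bsub>G\<^esub> g) h) = h"
    "\<phi> g ` S \<subseteq> S" "\<phi> (inv\<^bsub>G\<^esub> g) ` S \<subseteq> S"
    using g by auto
qed

lemma stable_normal_generate:
  assumes R: "R \<subseteq> carrier H"
    and stable: "\<And>g. g \<in> carrier G \<Longrightarrow> \<phi> g ` R \<subseteq> generate H R"
    and normal: "\<And>h. h \<in> carrier H \<Longrightarrow> (\<lambda>x. h \<otimes>\<^bsub>H\<^esub> x \<otimes>\<^bsub>H\<^esub> inv\<^bsub>H\<^esub> h) ` R \<subseteq> generate H R"
  shows "stable_normal (generate H R)"
  unfolding stable_normal_def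
  using H.normal_generate_of_conj_subset[OF R normal]
    group_hom.image_generate_subset[OF action_group_hom R H.generate_is_subgroup[OF R] stable]
  by blast

lemma subgroup_product_stable_normal:
  assumes M: "stable_normal M" and C: "C \<lhd> G"
  shows "subgroup (M \<times> C) P"
  using M C stable_normal_action[OF M] normal_subset[OF C]
  by (intro subgroup_product normal_imp_subgroup) (auto simp: stable_normal_def)

lemma twist_subgroup_is_subgroup:
  "A \<subseteq> carrier G \<Longrightarrow> B \<subseteq> carrier H \<Longrightarrow> subgroup (twist_subgroup H \<phi> A B) H"
  unfolding twist_subgroup_def by (rule H.generate_is_subgroup) (auto simp: subset_iff)

lemma twist_subgroup_unit: "B \<subseteq> carrier H \<Longrightarrow> twist_subgroup H \<phi> {\<one>\<^bsub>G\<^esub>} B = {\<one>\<^bsub>H\<^esub>}"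
proof -
  assume "B \<subseteq> carrier H"
  then have "(\<Union>g\<in>{\<one>\<^bsub>G\<^esub>}. \<Union>h\<in>B. {\<phi> g h \<otimes>\<^bsub>H\<^esub> inv\<^bsub>H\<^esub> h}) \<subseteq> {\<one>\<^bsub>H\<^esub>}" by auto
  then have "twist_subgroup H \<phi> {\<one>\<^bsub>G\<^esub>} B \<subseteq> {\<one>\<^bsub>H\<^esub>}"
    unfolding twist_subgroup_def
    by (rule H.generate_subgroup_incl[OF _ normal_imp_subgroup[OF H.one_is_normal]])
  then show ?thesis
    unfolding twist_subgroup_def by (intro equalityI) (simp_all add: generate.one)
qed

lemma twist_subgroup_subset_stable:
  assumes L: "subgroup L H" and A: "A \<subseteq> carrier G" and stable: "\<And>g l. g \<in> carrier G \<Longrightarrow> l \<in> L \<Longrightarrow> \<phi> g l \<in> L"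
  shows "twist_subgroup H \<phi> A L \<subseteq> L"
proof -
  have "\<phi> g l \<otimes>\<^bsub>H\<^esub> inv\<^bsub>H\<^esub> l \<in> L" if "g \<in> A" "l \<in> L" for g l
    using that A stable subgroup.m_closed[OF L] subgroup.m_inv_closed[OF L] by blast
  then show ?thesis
    unfolding twist_subgroup_def by (intro H.generate_subgroup_incl[OF _ L]) blast
qed

lemma twist_subgroup_normal:
  assumes \<Gamma>: "\<Gamma> \<subseteq> carrier G"
  shows "twist_subgroup H \<phi> \<Gamma> (carrier H) \<lhd> H"
proof -
  have R: "(\<Union>c\<in>\<Gamma>. \<Union>h\<in>carrier H. {\<phi> c h \<otimes>\<^bsub>H\<^esub> inv\<^bsub>H\<^esub> h}) \<subseteq> carrier H"
    using \<Gamma> by fastforce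
  have "k \<otimes>\<^bsub>H\<^esub> (\<phi> c h \<otimes>\<^bsub>H\<^esub> inv\<^bsub>H\<^esub> h) \<otimes>\<^bsub>H\<^esub> inv\<^bsub>H\<^esub> k \<in> twist_subgroup H \<phi> \<Gamma> (carrier H)"
    if "k \<in> carrier H" "c \<in> \<Gamma>" "h \<in> carrier H" for k c h
  proof -
    have "k \<otimes>\<^bsub>H\<^esub> (\<phi> c h \<otimes>\<^bsub>H\<^esub> inv\<^bsub>H\<^esub> h) \<otimes>\<^bsub>H\<^esub> inv\<^bsub>H\<^esub> k
        = inv\<^bsub>H\<^esub> (\<phi> c k \<otimes>\<^bsub>H\<^esub> inv\<^bsub>H\<^esub> k) \<otimes>\<^bsub>H\<^esub> (\<phi> c (k \<otimes>\<^bsub>H\<^esub> h) \<otimes>\<^bsub>H\<^esub> inv\<^bsub>H\<^esub> (k \<otimes>\<^bsub>H\<^esub> h))"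
      using that \<Gamma> by (auto simp: H.inv_mult_group H.m_assoc)
    moreover have "\<phi> c k \<otimes>\<^bsub>H\<^esub> inv\<^bsub>H\<^esub> k \<in> twist_subgroup H \<phi> \<Gamma> (carrier H)"
      "\<phi> c (k \<otimes>\<^bsub>H\<^esub> h) \<otimes>\<^bsub>H\<^esub> inv\<^bsub>H\<^esub> (k \<otimes>\<^bsub>H\<^esub> h) \<in> twist_subgroup H \<phi> \<Gamma> (carrier H)"
      using that by (auto intro!: twist_subgroup_incl)
    ultimately show ?thesis
      using subgroup.m_closed subgroup.m_inv_closed twist_subgroup_is_subgroup[OF \<Gamma> order_refl] by metis
  qed
  then show ?thesis
    unfolding twist_subgroup_def by (intro H.normal_generate_of_conj_subset[OF R]) (auto intro: generate.incl)
qed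

lemma twist_subgroup_action_subset:
  assumes \<Gamma>: "\<Gamma> \<lhd> G" and B: "B \<subseteq> carrier H" and x: "x \<in> carrier G" and stable: "\<phi> x ` B \<subseteq> B"
  shows "\<phi> x ` twist_subgroup H \<phi> \<Gamma> B \<subseteq> twist_subgroup H \<phi> \<Gamma> B"
proof -
  interpret \<Gamma>: normal \<Gamma> G by (rule \<Gamma>)
  have R: "(\<Union>c\<in>\<Gamma>. \<Union>b\<in>B. {\<phi> c b \<otimes>\<^bsub>H\<^esub> inv\<^bsub>H\<^esub> b}) \<subseteq> carrier H"
    using B \<Gamma>.subset by fastforce
  have "\<phi> x (\<phi> c b \<otimes>\<^bsub>H\<^esub> inv\<^bsub>H\<^esub> b) \<in> twist_subgroup H \<phi> \<Gamma> B" if "c \<in> \<Gamma>" "b \<in> B" for c b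
  proof -
    have "\<phi> x (\<phi> c b \<otimes>\<^bsub>H\<^esub> inv\<^bsub>H\<^esub> b) = \<phi> (x \<otimes>\<^bsub>G\<^esub> c \<otimes>\<^bsub>G\<^esub> inv\<^bsub>G\<^esub> x) (\<phi> x b) \<otimes>\<^bsub>H\<^esub> inv\<^bsub>H\<^esub> (\<phi> x b)"
      using x that B \<Gamma>.subset by auto
    moreover have "x \<otimes>\<^bsub>G\<^esub> c \<otimes>\<^bsub>G\<^esub> inv\<^bsub>G\<^esub> x \<in> \<Gamma>" "\<phi> x b \<in> B"
      using x that stable \<Gamma>.inv_op_closed2 by auto
    ultimately show ?thesis by (simp only: twist_subgroup_incl)
  qed
  then show ?thesis
    unfolding twist_subgroup_def
    by (intro group_hom.image_generate_subset[OF action_group_hom[OF x] R H.generate_is_subgroup[OF R]]) blast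
qed

lemma comm_subgroup_action_subset:
  assumes A: "A \<subseteq> carrier H" and B: "B \<subseteq> carrier H" and x: "x \<in> carrier G"
    and stable: "\<phi> x ` A \<subseteq> A" "\<phi> x ` B \<subseteq> B"
  shows "\<phi> x ` comm_subgroup H A B \<subseteq> comm_subgroup H A B"
proof -
  have R: "(\<Union>a\<in>A. \<Union>b\<in>B. {a \<otimes>\<^bsub>H\<^esub> b \<otimes>\<^bsub>H\<^esub> inv\<^bsub>H\<^esub> a \<otimes>\<^bsub>H\<^esub> inv\<^bsub>H\<^esub> b}) \<subseteq> carrier H"
    using A B by fastforce
  have "\<phi> x (a \<otimes>\<^bsub>H\<^esub> b \<otimes>\<^bsub>H\<^esub> inv\<^bsub>H\<^esub> a \<otimes>\<^bsub>H\<^esub> inv\<^bsub>H\<^esub> b) \<in> comm_subgroup H A B" if "a \<in> A" "b \<in> B" for a b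
  proof -
    have "\<phi> x (a \<otimes>\<^bsub>H\<^esub> b \<otimes>\<^bsub>H\<^esub> inv\<^bsub>H\<^esub> a \<otimes>\<^bsub>H\<^esub> inv\<^bsub>H\<^esub> b)
        = \<phi> x a \<otimes>\<^bsub>H\<^esub> \<phi> x b \<otimes>\<^bsub>H\<^esub> inv\<^bsub>H\<^esub> (\<phi> x a) \<otimes>\<^bsub>H\<^esub> inv\<^bsub>H\<^esub> (\<phi> x b)"
      using x that A B by (simp add: subset_iff)
    moreover have "\<phi> x a \<in> A" "\<phi> x b \<in> B" using that stable by auto
    ultimately show ?thesis by (simp only: comm_subgroup_incl)
  qed
  then show ?thesis
    unfolding comm_subgroup_def
    by (intro group_hom.image_generate_subset[OF action_group_hom[OF x] R H.generate_is_subgroup[OF R]]) blast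
qed

text \<open>Conjugation by k multiplies m \<in> L by the commutator [k, m] \<in> [H, L]; this keeps the
  conjugates of the generators lying in L inside the step.\<close>

lemma stable_normal_series_step:
  assumes \<Gamma>: "\<Gamma> \<lhd> G" and L: "stable_normal L"
  shows "stable_normal (generate H (twist_subgroup H \<phi> \<Gamma> (carrier H)
           \<union> twist_subgroup H \<phi> (carrier G) L \<union> comm_subgroup H (carrier H) L))"
    (is "stable_normal (generate H (?T \<union> ?T' \<union> ?C))")
proof -
  interpret L: normal L H using L by (simp add: stable_normal_def)
  have L_stable: "\<phi> g ` L \<subseteq> L" if "g \<in> carrier G" for g
    using L that unfolding stable_normal_def by blast
  have \<Gamma>_carrier: "\<Gamma> \<subseteq> carrier G" by (rule normal_subset[OF \<Gamma>])
  have carrier: "?T \<union> ?T' \<union> ?C \<subseteq> carrier H"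
    using twist_subgroup_is_subgroup[OF \<Gamma>_carrier order_refl]
      twist_subgroup_is_subgroup[OF order_refl L.subset] H.comm_subgroup_is_subgroup[OF order_refl L.subset]
    by (auto dest: subgroup.subset)
  have in_L: "?T' \<union> ?C \<subseteq> L"
    using twist_subgroup_subset_stable[OF L.subgroup_axioms order_refl] L_stable
      H.comm_subgroup_subset_normal[OF L.normal_axioms]
    by blast
  show ?thesis
  proof (rule stable_normal_generate[OF carrier])
    fix g
    assume g: "g \<in> carrier G"
    moreover have "\<phi> g ` carrier H \<subseteq> carrier H" using g by auto
    ultimately have "\<phi> g ` ?T \<subseteq> ?T" "\<phi> g ` ?T' \<subseteq> ?T'" "\<phi> g ` ?C \<subseteq> ?C"
      using twist_subgroup_action_subset[OF \<Gamma> order_refl g] twist_subgroup_action_subset[OF G.normal_self L.subset g]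
        comm_subgroup_action_subset[OF order_refl L.subset g] L_stable by auto
    then show "\<phi> g ` (?T \<union> ?T' \<union> ?C) \<subseteq> generate H (?T \<union> ?T' \<union> ?C)"
      by (auto intro: generate.incl)
  next
    fix k
    assume k: "k \<in> carrier H"
    have "k \<otimes>\<^bsub>H\<^esub> m \<otimes>\<^bsub>H\<^esub> inv\<^bsub>H\<^esub> k \<in> generate H (?T \<union> ?T' \<union> ?C)" if m: "m \<in> ?T \<union> ?T' \<union> ?C" for m
    proof (cases "m \<in> ?T")
      case True
      then show ?thesis
        using normal.inv_op_closed2[OF twist_subgroup_normal[OF \<Gamma>_carrier] k] by (blast intro: generate.incl)
    next
      case False
      then have "m \<in> L" "m \<in> ?T' \<union> ?C" using m in_L by auto
      then have "(k \<otimes>\<^bsub>H\<^esub> m \<otimes>\<^bsub>H\<^esub> inv\<^bsub>H\<^esub> k \<otimes>\<^bsub>H\<^esub> inv\<^bsub>H\<^esub> m) \<otimes>\<^bsub>H\<^esub> m \<in> generate H (?T \<union> ?T' \<union> ?C)"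
        using k by (blast intro: generate.eng generate.incl comm_subgroup_incl)
      then show ?thesis using k \<open>m \<in> L\<close> by (simp add: H.m_assoc)
    qed
    then show "(\<lambda>x. k \<otimes>\<^bsub>H\<^esub> x \<otimes>\<^bsub>H\<^esub> inv\<^bsub>H\<^esub> k) ` (?T \<union> ?T' \<union> ?C) \<subseteq> generate H (?T \<union> ?T' \<union> ?C)"
      by blast
  qed
qed

lemma stable_normal_Lser: "stable_normal (Lser G H \<phi> (Suc n))"
  by (induction n) (simp_all add: stable_normal_carrier stable_normal_series_step G.lcs_normal)

text \<open>V_(n+1) is the series step applied to V_n with \<Gamma> = {1}, whose twists are trivial.\<close>

lemma stable_normal_Vser: "stable_normal (Vser G H \<phi> (Suc n))"
proof (induction n)
  case 0
  then show ?case by (simp add: stable_normal_carrier)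
next
  case (Suc n)
  let ?V = "Vser G H \<phi> (Suc n)"
  have V: "?V \<subseteq> carrier H" using Suc by (rule stable_normal_subset)
  have "twist_subgroup H \<phi> (carrier G) ?V \<union> comm_subgroup H (carrier H) ?V \<subseteq> carrier H"
    using subgroup.subset[OF twist_subgroup_is_subgroup[OF order_refl V]] subgroup.subset[OF H.comm_subgroup_is_subgroup[OF order_refl V]]
    by (rule Un_least)
  then have eq: "Vser G H \<phi> (Suc (Suc n)) = generate H (twist_subgroup H \<phi> {\<one>\<^bsub>G\<^esub>} (carrier H)
      \<union> twist_subgroup H \<phi> (carrier G) ?V \<union> comm_subgroup H (carrier H) ?V)"
    by (simp add: twist_subgroup_unit H.generate_insert_one)
  show ?case unfolding eq by (rule stable_normal_series_step[OF G.one_is_normal Suc.IH])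
qed

lemma Lser_twist_lcs_mem:
  "g \<in> lcs G (Suc n) \<Longrightarrow> h \<in> carrier H \<Longrightarrow> \<phi> g h \<otimes>\<^bsub>H\<^esub> inv\<^bsub>H\<^esub> h \<in> Lser G H \<phi> (Suc (Suc n))"
  by (simp only: Lser.simps) (blast intro: generate.incl twist_subgroup_incl)

lemma Lser_twist_mem:
  "g \<in> carrier G \<Longrightarrow> l \<in> Lser G H \<phi> (Suc n) \<Longrightarrow> \<phi> g l \<otimes>\<^bsub>H\<^esub> inv\<^bsub>H\<^esub> l \<in> Lser G H \<phi> (Suc (Suc n))"
  by (simp only: Lser.simps) (blast intro: generate.incl twist_subgroup_incl)

lemma Vser_twist_mem:
  "g \<in> carrier G \<Longrightarrow> l \<in> Vser G H \<phi> (Suc n) \<Longrightarrow> \<phi> g l \<otimes>\<^bsub>H\<^esub> inv\<^bsub>H\<^esub> l \<in> Vser G H \<phi> (Suc (Suc n))"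
  by (simp only: Vser.simps) (blast intro: generate.incl twist_subgroup_incl)

lemma Vser_commutator_mem:
  "h \<in> carrier H \<Longrightarrow> l \<in> Vser G H \<phi> (Suc n)
    \<Longrightarrow> h \<otimes>\<^bsub>H\<^esub> l \<otimes>\<^bsub>H\<^esub> inv\<^bsub>H\<^esub> h \<otimes>\<^bsub>H\<^esub> inv\<^bsub>H\<^esub> l \<in> Vser G H \<phi> (Suc (Suc n))"
  by (simp only: Vser.simps) (blast intro: generate.incl comm_subgroup_incl)

lemma conj_product_mem:
  assumes M: "stable_normal M" and C: "C \<lhd> G" and A: "A \<subseteq> carrier H" and B: "B \<subseteq> carrier G"
    and twist: "\<And>c h. c \<in> C \<Longrightarrow> h \<in> A \<Longrightarrow> \<phi> c h \<otimes>\<^bsub>H\<^esub> inv\<^bsub>H\<^esub> h \<in> M"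
    and x: "x \<in> A \<times> B" and y: "y \<in> M \<times> C"
  shows "x \<otimes>\<^bsub>P\<^esub> y \<otimes>\<^bsub>P\<^esub> inv\<^bsub>P\<^esub> x \<in> M \<times> C"
proof -
  interpret M: normal M H using M by (simp add: stable_normal_def)
  interpret C: normal C G by (rule C)
  obtain h g l c where x: "x = (h, g)" "h \<in> A" "g \<in> B" and y: "y = (l, c)" "l \<in> M" "c \<in> C"
    using x y by auto
  have carrier: "h \<in> carrier H" "g \<in> carrier G" "l \<in> carrier H" "c \<in> carrier G"
    using x y A B M.subset C.subset by auto
  have c': "g \<otimes>\<^bsub>G\<^esub> c \<otimes>\<^bsub>G\<^esub> inv\<^bsub>G\<^esub> g \<in> C" using C.inv_op_closed2 carrier y by blast
  have "h \<otimes>\<^bsub>H\<^esub> \<phi> g l \<otimes>\<^bsub>H\<^esub> inv\<^bsub>H\<^esub> h \<in> M"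
    using M.inv_op_closed2 stable_normal_action[OF M] carrier y by blast
  moreover have "\<phi> (g \<otimes>\<^bsub>G\<^esub> c \<otimes>\<^bsub>G\<^esub> inv\<^bsub>G\<^esub> g) h \<otimes>\<^bsub>H\<^esub> inv\<^bsub>H\<^esub> h \<in> M"
    using twist c' x by blast
  ultimately show ?thesis
    unfolding x y semidirect_conj[OF carrier] using c' by (auto intro: M.m_closed M.m_inv_closed)
qed

lemma comm_subgroup_product_subset:
  assumes AB: "subgroup (A \<times> B) P" and AB': "subgroup (A' \<times> B') P" and MC: "subgroup (M \<times> C) P"
    and normalizes: "\<And>x y. x \<in> A \<times> B \<union> A' \<times> B' \<Longrightarrow> y \<in> M \<times> C \<Longrightarrow> x \<otimes>\<^bsub>P\<^esub> y \<otimes>\<^bsub>P\<^esub> inv\<^bsub>P\<^esub> x \<in> M \<times> C"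
    and twist: "\<And>b a'. b \<in> B \<Longrightarrow> a' \<in> A' \<Longrightarrow> \<phi> b a' \<otimes>\<^bsub>H\<^esub> inv\<^bsub>H\<^esub> a' \<in> M"
    and twist': "\<And>b' a. b' \<in> B' \<Longrightarrow> a \<in> A \<Longrightarrow> \<phi> b' a \<otimes>\<^bsub>H\<^esub> inv\<^bsub>H\<^esub> a \<in> M"
    and comm_H: "\<And>a a'. a \<in> A \<Longrightarrow> a' \<in> A' \<Longrightarrow> a \<otimes>\<^bsub>H\<^esub> a' \<otimes>\<^bsub>H\<^esub> inv\<^bsub>H\<^esub> a \<otimes>\<^bsub>H\<^esub> inv\<^bsub>H\<^esub> a' \<in> M"
    and comm_G: "\<And>b b'. b \<in> B \<Longrightarrow> b' \<in> B' \<Longrightarrow> b \<otimes>\<^bsub>G\<^esub> b' \<otimes>\<^bsub>G\<^esub> inv\<^bsub>G\<^esub> b \<otimes>\<^bsub>G\<^esub> inv\<^bsub>G\<^esub> b' \<in> C"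
  shows "comm_subgroup P (A \<times> B) (A' \<times> B') \<subseteq> M \<times> C"
proof -
  interpret P: group P by (rule semidirect_group)
  note AB_carrier = subgroup_productD[OF AB] and AB'_carrier = subgroup_productD[OF AB']
    and MC_carrier = subgroup_productD[OF MC]
  define R where "R = (\<lambda>a. (a, \<one>\<^bsub>G\<^esub>)) ` A \<union> (\<lambda>b. (\<one>\<^bsub>H\<^esub>, b)) ` B"
  define R' where "R' = (\<lambda>a. (a, \<one>\<^bsub>G\<^esub>)) ` A' \<union> (\<lambda>b. (\<one>\<^bsub>H\<^esub>, b)) ` B'"
  have R: "A \<times> B = generate P R" and R': "A' \<times> B' = generate P R'"
    unfolding R_def R'_def using product_eq_generate AB AB' by blast+
  have gens: "x \<otimes>\<^bsub>P\<^esub> y \<otimes>\<^bsub>P\<^esub> inv\<^bsub>P\<^esub> x \<otimes>\<^bsub>P\<^esub> inv\<^bsub>P\<^esub> y \<in> M \<times> C"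
    if x: "x \<in> R" and y: "y \<in> R'" for x y
    using x y unfolding R_def R'_def
  proof (elim UnE imageE)
    fix a a' assume "x = (a, \<one>\<^bsub>G\<^esub>)" "a \<in> A" "y = (a', \<one>\<^bsub>G\<^esub>)" "a' \<in> A'"
    moreover have "a \<in> carrier H" "a' \<in> carrier H" using calculation AB_carrier AB'_carrier by auto
    ultimately show ?thesis using comm_H MC_carrier by (simp add: semidirect_commutator_HH)
  next
    fix a b' assume x: "x = (a, \<one>\<^bsub>G\<^esub>)" "a \<in> A" and y: "y = (\<one>\<^bsub>H\<^esub>, b')" "b' \<in> B'"
    have a: "a \<in> carrier H" and b': "b' \<in> carrier G" using x y AB_carrier AB'_carrier by auto
    have m: "\<phi> b' a \<otimes>\<^bsub>H\<^esub> inv\<^bsub>H\<^esub> a \<in> carrier H" using a b' by simp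
    have "inv\<^bsub>P\<^esub> (\<phi> b' a \<otimes>\<^bsub>H\<^esub> inv\<^bsub>H\<^esub> a, \<one>\<^bsub>G\<^esub>) \<in> M \<times> C"
      using twist'[OF y(2) x(2)] MC_carrier by (intro subgroup.m_inv_closed[OF MC]) simp
    then show ?thesis unfolding x y semidirect_commutator_HG[OF a b'] semidirect_inv_fst[OF m] .
  next
    fix b a' assume "x = (\<one>\<^bsub>H\<^esub>, b)" "b \<in> B" "y = (a', \<one>\<^bsub>G\<^esub>)" "a' \<in> A'"
    moreover have "b \<in> carrier G" "a' \<in> carrier H" using calculation AB_carrier AB'_carrier by auto
    ultimately show ?thesis using twist MC_carrier by (simp add: semidirect_commutator_GH)
  next
    fix b b' assume "x = (\<one>\<^bsub>H\<^esub>, b)" "b \<in> B" "y = (\<one>\<^bsub>H\<^esub>, b')" "b' \<in> B'"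
    moreover have "b \<in> carrier G" "b' \<in> carrier G" using calculation AB_carrier AB'_carrier by auto
    ultimately show ?thesis using comm_G MC_carrier by (simp add: semidirect_commutator_GG)
  qed
  have "comm_subgroup P (generate P R) (generate P R') \<subseteq> M \<times> C"
  proof (rule P.comm_subgroup_generate_subset[OF _ _ MC _ _ gens])
    show "R \<subseteq> carrier P" "R' \<subseteq> carrier P"
      using AB_carrier AB'_carrier unfolding R_def R'_def by auto
  qed (use normalizes in \<open>auto simp flip: R R'\<close>)
  then show ?thesis unfolding R R' .
qed

lemma comm_subgroup_product_generators:
  assumes AB: "subgroup (A \<times> B) P" and AB': "subgroup (A' \<times> B') P"
  shows "\<And>a a'. a \<in> A \<Longrightarrow> a' \<in> A' \<Longrightarrow>
      (a \<otimes>\<^bsub>H\<^esub> a' \<otimes>\<^bsub>H\<^esub> inv\<^bsub>H\<^esub> a \<otimes>\<^bsub>H\<^esub> inv\<^bsub>H\<^esub> a', \<one>\<^bsub>G\<^esub>) \<in> comm_subgroup P (A \<times> B) (A' \<times> B')"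
    and "\<And>b a'. b \<in> B \<Longrightarrow> a' \<in> A' \<Longrightarrow>
      (\<phi> b a' \<otimes>\<^bsub>H\<^esub> inv\<^bsub>H\<^esub> a', \<one>\<^bsub>G\<^esub>) \<in> comm_subgroup P (A \<times> B) (A' \<times> B')"
    and "\<And>b' a. b' \<in> B' \<Longrightarrow> a \<in> A \<Longrightarrow>
      (\<phi> b' a \<otimes>\<^bsub>H\<^esub> inv\<^bsub>H\<^esub> a, \<one>\<^bsub>G\<^esub>) \<in> comm_subgroup P (A \<times> B) (A' \<times> B')"
    and "\<And>b b'. b \<in> B \<Longrightarrow> b' \<in> B' \<Longrightarrow>
      (\<one>\<^bsub>H\<^esub>, b \<otimes>\<^bsub>G\<^esub> b' \<otimes>\<^bsub>G\<^esub> inv\<^bsub>G\<^esub> b \<otimes>\<^bsub>G\<^esub> inv\<^bsub>G\<^esub> b') \<in> comm_subgroup P (A \<times> B) (A' \<times> B')"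
proof -
  interpret P: group P by (rule semidirect_group)
  note AB_carrier = subgroup_productD[OF AB] and AB'_carrier = subgroup_productD[OF AB']
  have swapped: "comm_subgroup P (A' \<times> B') (A \<times> B) = comm_subgroup P (A \<times> B) (A' \<times> B')"
    using subgroup.subset[OF AB] subgroup.subset[OF AB'] by (rule P.comm_subgroup_commute[symmetric])
  show "(a \<otimes>\<^bsub>H\<^esub> a' \<otimes>\<^bsub>H\<^esub> inv\<^bsub>H\<^esub> a \<otimes>\<^bsub>H\<^esub> inv\<^bsub>H\<^esub> a', \<one>\<^bsub>G\<^esub>) \<in> comm_subgroup P (A \<times> B) (A' \<times> B')"
    if "a \<in> A" "a' \<in> A'" for a a'
  proof -
    have "(a, \<one>\<^bsub>G\<^esub>) \<otimes>\<^bsub>P\<^esub> (a', \<one>\<^bsub>G\<^esub>) \<otimes>\<^bsub>P\<^esub> inv\<^bsub>P\<^esub> (a, \<one>\<^bsub>G\<^esub>) \<otimes>\<^bsub>P\<^esub> inv\<^bsub>P\<^esub> (a', \<one>\<^bsub>G\<^esub>)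
        \<in> comm_subgroup P (A \<times> B) (A' \<times> B')"
      using that AB_carrier AB'_carrier by (intro comm_subgroup_incl) auto
    moreover have "a \<in> carrier H" "a' \<in> carrier H" using that AB_carrier AB'_carrier by auto
    ultimately show ?thesis by (simp only: semidirect_commutator_HH)
  qed
  show "(\<phi> b a' \<otimes>\<^bsub>H\<^esub> inv\<^bsub>H\<^esub> a', \<one>\<^bsub>G\<^esub>) \<in> comm_subgroup P (A \<times> B) (A' \<times> B')"
    if "b \<in> B" "a' \<in> A'" for b a'
  proof -
    have "(\<one>\<^bsub>H\<^esub>, b) \<otimes>\<^bsub>P\<^esub> (a', \<one>\<^bsub>G\<^esub>) \<otimes>\<^bsub>P\<^esub> inv\<^bsub>P\<^esub> (\<one>\<^bsub>H\<^esub>, b) \<otimes>\<^bsub>P\<^esub> inv\<^bsub>P\<^esub> (a', \<one>\<^bsub>G\<^esub>)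
        \<in> comm_subgroup P (A \<times> B) (A' \<times> B')"
      using that AB_carrier AB'_carrier by (intro comm_subgroup_incl) auto
    moreover have "b \<in> carrier G" "a' \<in> carrier H" using that AB_carrier AB'_carrier by auto
    ultimately show ?thesis by (simp only: semidirect_commutator_GH)
  qed
  show "(\<phi> b' a \<otimes>\<^bsub>H\<^esub> inv\<^bsub>H\<^esub> a, \<one>\<^bsub>G\<^esub>) \<in> comm_subgroup P (A \<times> B) (A' \<times> B')"
    if "b' \<in> B'" "a \<in> A" for b' a
  proof -
    have "(\<one>\<^bsub>H\<^esub>, b') \<otimes>\<^bsub>P\<^esub> (a, \<one>\<^bsub>G\<^esub>) \<otimes>\<^bsub>P\<^esub> inv\<^bsub>P\<^esub> (\<one>\<^bsub>H\<^esub>, b') \<otimes>\<^bsub>P\<^esub> inv\<^bsub>P\<^esub> (a, \<one>\<^bsub>G\<^esub>)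
        \<in> comm_subgroup P (A' \<times> B') (A \<times> B)"
      using that AB_carrier AB'_carrier by (intro comm_subgroup_incl) auto
    moreover have "b' \<in> carrier G" "a \<in> carrier H" using that AB_carrier AB'_carrier by auto
    ultimately show ?thesis by (simp only: semidirect_commutator_GH swapped)
  qed
  show "(\<one>\<^bsub>H\<^esub>, b \<otimes>\<^bsub>G\<^esub> b' \<otimes>\<^bsub>G\<^esub> inv\<^bsub>G\<^esub> b \<otimes>\<^bsub>G\<^esub> inv\<^bsub>G\<^esub> b') \<in> comm_subgroup P (A \<times> B) (A' \<times> B')"
    if "b \<in> B" "b' \<in> B'" for b b'
  proof -
    have "(\<one>\<^bsub>H\<^esub>, b) \<otimes>\<^bsub>P\<^esub> (\<one>\<^bsub>H\<^esub>, b') \<otimes>\<^bsub>P\<^esub> inv\<^bsub>P\<^esub> (\<one>\<^bsub>H\<^esub>, b) \<otimes>\<^bsub>P\<^esub> inv\<^bsub>P\<^esub> (\<one>\<^bsub>H\<^esub>, b')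
        \<in> comm_subgroup P (A \<times> B) (A' \<times> B')"
      using that AB_carrier AB'_carrier by (intro comm_subgroup_incl) auto
    moreover have "b \<in> carrier G" "b' \<in> carrier G" using that AB_carrier AB'_carrier by auto
    ultimately show ?thesis by (simp only: semidirect_commutator_GG)
  qed
qed

lemma product_subset_comm_subgroup:
  assumes AB: "subgroup (A \<times> B) P" and AB': "subgroup (A' \<times> B') P"
  shows "generate H (twist_subgroup H \<phi> B A' \<union> twist_subgroup H \<phi> B' A \<union> comm_subgroup H A A')
      \<times> comm_subgroup G B B' \<subseteq> comm_subgroup P (A \<times> B) (A' \<times> B')"
    (is "generate H ?M \<times> ?D \<subseteq> ?Q")
proof -
  interpret P: group P by (rule semidirect_group)
  note gens = comm_subgroup_product_generators[OF AB AB']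
  have A: "A \<subseteq> carrier H" and B: "B \<subseteq> carrier G" and A': "A' \<subseteq> carrier H" and B': "B' \<subseteq> carrier G"
    using subgroup_productD[OF AB] subgroup_productD[OF AB'] by blast+
  have Q: "subgroup ?Q P"
    using subgroup.subset[OF AB] subgroup.subset[OF AB'] by (rule P.comm_subgroup_is_subgroup)
  let ?Q_H = "{a \<in> carrier H. (a, \<one>\<^bsub>G\<^esub>) \<in> ?Q}" and ?Q_G = "{b \<in> carrier G. (\<one>\<^bsub>H\<^esub>, b) \<in> ?Q}"
  have Q_H: "subgroup ?Q_H H" by (rule group_hom.subgroup_vimage[OF fst_embedding_hom Q])
  have Q_G: "subgroup ?Q_G G" by (rule group_hom.subgroup_vimage[OF snd_embedding_hom Q])
  have "twist_subgroup H \<phi> B A' \<subseteq> ?Q_H"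
    unfolding twist_subgroup_def using B A' gens(2)
    by (intro H.generate_subgroup_incl[OF _ Q_H]) (auto simp: subset_iff)
  moreover have "twist_subgroup H \<phi> B' A \<subseteq> ?Q_H"
    unfolding twist_subgroup_def using B' A gens(3)
    by (intro H.generate_subgroup_incl[OF _ Q_H]) (auto simp: subset_iff)
  moreover have "comm_subgroup H A A' \<subseteq> ?Q_H"
    unfolding comm_subgroup_def[of H] using A A' gens(1)
    by (intro H.generate_subgroup_incl[OF _ Q_H]) (auto simp: subset_iff)
  ultimately have M: "generate H ?M \<subseteq> ?Q_H"
    by (intro H.generate_subgroup_incl[OF _ Q_H]) blast
  have D: "?D \<subseteq> ?Q_G"
    unfolding comm_subgroup_def[of G] using B B' gens(4)
    by (intro G.generate_subgroup_incl[OF _ Q_G]) (auto simp: subset_iff)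
  show ?thesis
  proof safe
    fix l c
    assume "l \<in> generate H ?M" and "c \<in> ?D"
    then have "l \<in> carrier H" "c \<in> carrier G" "(l, \<one>\<^bsub>G\<^esub>) \<in> ?Q" "(\<one>\<^bsub>H\<^esub>, c) \<in> ?Q"
      using M D by blast+
    then show "(l, c) \<in> ?Q"
      using subgroup.m_closed[OF Q, of "(l, \<one>\<^bsub>G\<^esub>)" "(\<one>\<^bsub>H\<^esub>, c)"] by simp
  qed
qed

lemma Lser_lcs_comm_subgroup:
  "comm_subgroup P (Lser G H \<phi> (Suc n) \<times> lcs G (Suc n)) (carrier H \<times> carrier G)
     = Lser G H \<phi> (Suc (Suc n)) \<times> lcs G (Suc (Suc n))"
proof -
  interpret P: group P by (rule semidirect_group)
  let ?L = "Lser G H \<phi> (Suc n)" and ?\<Gamma> = "lcs G (Suc n)"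
  let ?L' = "Lser G H \<phi> (Suc (Suc n))" and ?\<Gamma>' = "lcs G (Suc (Suc n))"
  have L: "stable_normal ?L" and L': "stable_normal ?L'" by (rule stable_normal_Lser)+
  have \<Gamma>: "?\<Gamma> \<lhd> G" and \<Gamma>': "?\<Gamma>' \<lhd> G" by (rule G.lcs_normal)+
  have L\<Gamma>: "subgroup (?L \<times> ?\<Gamma>) P" and L'\<Gamma>': "subgroup (?L' \<times> ?\<Gamma>') P"
    using L \<Gamma> L' \<Gamma>' by (blast intro: subgroup_product_stable_normal)+
  have HG: "subgroup (carrier H \<times> carrier G) P" using P.subgroup_self by simp
  have "comm_subgroup H ?L (carrier H) = comm_subgroup H (carrier H) ?L"
    using stable_normal_subset[OF L] by (intro H.comm_subgroup_commute) auto
  then have L'_eq: "?L' = generate H (twist_subgroup H \<phi> ?\<Gamma> (carrier H)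
      \<union> twist_subgroup H \<phi> (carrier G) ?L \<union> comm_subgroup H ?L (carrier H))"
    by simp
  have \<Gamma>'_eq: "?\<Gamma>' = comm_subgroup G ?\<Gamma> (carrier G)" by simp
  have twist_\<Gamma>: "\<phi> c h \<otimes>\<^bsub>H\<^esub> inv\<^bsub>H\<^esub> h \<in> ?L'" if "c \<in> ?\<Gamma>" "h \<in> carrier H" for c h
    using that by (rule Lser_twist_lcs_mem)
  have twist_L: "\<phi> g l \<otimes>\<^bsub>H\<^esub> inv\<^bsub>H\<^esub> l \<in> ?L'" if "g \<in> carrier G" "l \<in> ?L" for g l
    using that by (rule Lser_twist_mem)
  have comm_H: "l \<otimes>\<^bsub>H\<^esub> h \<otimes>\<^bsub>H\<^esub> inv\<^bsub>H\<^esub> l \<otimes>\<^bsub>H\<^esub> inv\<^bsub>H\<^esub> h \<in> ?L'" if "l \<in> ?L" "h \<in> carrier H" for l h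
    unfolding L'_eq using that by (blast intro: generate.incl comm_subgroup_incl)
  have comm_G: "c \<otimes>\<^bsub>G\<^esub> g \<otimes>\<^bsub>G\<^esub> inv\<^bsub>G\<^esub> c \<otimes>\<^bsub>G\<^esub> inv\<^bsub>G\<^esub> g \<in> ?\<Gamma>'" if "c \<in> ?\<Gamma>" "g \<in> carrier G" for c g
    unfolding \<Gamma>'_eq using that by (rule comm_subgroup_incl)
  have normalizes: "x \<otimes>\<^bsub>P\<^esub> y \<otimes>\<^bsub>P\<^esub> inv\<^bsub>P\<^esub> x \<in> ?L' \<times> ?\<Gamma>'"
    if "x \<in> ?L \<times> ?\<Gamma> \<union> carrier H \<times> carrier G" "y \<in> ?L' \<times> ?\<Gamma>'" for x y
  proof (rule conj_product_mem[OF L' \<Gamma>' order_refl order_refl])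
    show "\<phi> c h \<otimes>\<^bsub>H\<^esub> inv\<^bsub>H\<^esub> h \<in> ?L'" if "c \<in> ?\<Gamma>'" "h \<in> carrier H" for c h
      using that G.lcs_Suc_subset twist_\<Gamma> by blast
    show "x \<in> carrier H \<times> carrier G"
      using that(1) stable_normal_subset[OF L] normal_subset[OF \<Gamma>] by blast
  qed (rule that(2))
  show ?thesis
  proof
    show "comm_subgroup P (?L \<times> ?\<Gamma>) (carrier H \<times> carrier G) \<subseteq> ?L' \<times> ?\<Gamma>'"
      by (rule comm_subgroup_product_subset[OF L\<Gamma> HG L'\<Gamma>' normalizes twist_\<Gamma> twist_L comm_H comm_G])
    show "?L' \<times> ?\<Gamma>' \<subseteq> comm_subgroup P (?L \<times> ?\<Gamma>) (carrier H \<times> carrier G)"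
      unfolding L'_eq \<Gamma>'_eq by (rule product_subset_comm_subgroup[OF L\<Gamma> HG])
  qed
qed

lemma lcs_semidirect: "lcs P (Suc n) = Lser G H \<phi> (Suc n) \<times> lcs G (Suc n)"
proof (induction n)
  case 0
  then show ?case by simp
next
  case (Suc n)
  then have "lcs P (Suc (Suc n)) = comm_subgroup P (Lser G H \<phi> (Suc n) \<times> lcs G (Suc n)) (carrier H \<times> carrier G)"
    by simp
  then show ?case by (simp only: Lser_lcs_comm_subgroup)
qed

lemma derived_series_semidirect_subset:
  "derived_series P m \<subseteq> Vser G H \<phi> (Suc m) \<times> derived_series G m"
proof (induction m)
  case 0
  then show ?case by (simp add: derived_series_def)
next
  case (Suc m)
  interpret P: group P by (rule semidirect_group)
  let ?V = "Vser G H \<phi> (Suc m)" and ?D = "derived_series G m"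
  let ?V' = "Vser G H \<phi> (Suc (Suc m))" and ?D' = "derived_series G (Suc m)"
  have V: "stable_normal ?V" and V': "stable_normal ?V'" by (rule stable_normal_Vser)+
  have D: "?D \<lhd> G" and D': "?D' \<lhd> G" by (rule G.derived_series_normal)+
  have VD: "subgroup (?V \<times> ?D) P" and V'D': "subgroup (?V' \<times> ?D') P"
    using V D V' D' by (blast intro: subgroup_product_stable_normal)+
  have twist: "\<phi> c v \<otimes>\<^bsub>H\<^esub> inv\<^bsub>H\<^esub> v \<in> ?V'" if "c \<in> carrier G" "v \<in> ?V" for c v
    using that by (rule Vser_twist_mem)
  have twist_D: "\<phi> c v \<otimes>\<^bsub>H\<^esub> inv\<^bsub>H\<^esub> v \<in> ?V'" if "c \<in> ?D" "v \<in> ?V" for c v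
    using that normal_subset[OF D] twist by blast
  have comm_H: "v \<otimes>\<^bsub>H\<^esub> w \<otimes>\<^bsub>H\<^esub> inv\<^bsub>H\<^esub> v \<otimes>\<^bsub>H\<^esub> inv\<^bsub>H\<^esub> w \<in> ?V'" if "v \<in> ?V" "w \<in> ?V" for v w
    using that stable_normal_subset[OF V] by (blast intro: Vser_commutator_mem)
  have comm_G: "c \<otimes>\<^bsub>G\<^esub> d \<otimes>\<^bsub>G\<^esub> inv\<^bsub>G\<^esub> c \<otimes>\<^bsub>G\<^esub> inv\<^bsub>G\<^esub> d \<in> ?D'" if "c \<in> ?D" "d \<in> ?D" for c d
    unfolding derived_series_Suc using that by (rule comm_subgroup_incl)
  have normalizes: "x \<otimes>\<^bsub>P\<^esub> y \<otimes>\<^bsub>P\<^esub> inv\<^bsub>P\<^esub> x \<in> ?V' \<times> ?D'"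
    if "x \<in> ?V \<times> ?D \<union> ?V \<times> ?D" "y \<in> ?V' \<times> ?D'" for x y
    using that stable_normal_subset[OF V] normal_subset[OF D] normal_subset[OF D'] twist
    by (intro conj_product_mem[OF V' D']) auto
  have "derived_series P (Suc m) \<subseteq> comm_subgroup P (?V \<times> ?D) (?V \<times> ?D)"
    unfolding derived_series_Suc using Suc.IH by (intro P.comm_subgroup_mono)
  also have "\<dots> \<subseteq> ?V' \<times> ?D'"
    by (rule comm_subgroup_product_subset[OF VD VD V'D' normalizes twist_D twist_D comm_H comm_G])
  finally show ?case .
qed

end

theorem theorem2:
  fixes G :: "('b, 'd) monoid_scheme" and H :: "('a, 'c) monoid_scheme"
    and \<phi> :: "'b \<Rightarrow> 'a \<Rightarrow> 'a"
  assumes "group G" and "group H"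
    and "\<phi> \<in> hom G (AutoGroup H)"
    and "n \<ge> 1"
  shows "(\<forall>g \<in> lcs G n. bij_betw (\<phi> g) (Lser G H \<phi> n) (Lser G H \<phi> n))
       \<and> (\<forall>g \<in> derived_series G (n - 1). bij_betw (\<phi> g) (Vser G H \<phi> n) (Vser G H \<phi> n))
       \<and> lcs (semidirect H G \<phi>) n = Lser G H \<phi> n \<times> lcs G n
       \<and> derived_series (semidirect H G \<phi>) (n - 1) \<subseteq> Vser G H \<phi> n \<times> derived_series G (n - 1)"
proof -
  interpret aut_action G H \<phi>
    using assms(1-3) by (simp add: aut_action_def aut_action_axioms_def)
  obtain k where n: "n = Suc k" using assms(4) by (cases n) auto
  have "lcs G n \<subseteq> carrier G" "derived_series G (n - 1) \<subseteq> carrier G"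
    unfolding n using normal_subset G.lcs_normal G.derived_series_normal by blast+
  then show ?thesis
    using stable_normal_bij_betw[OF stable_normal_Lser] stable_normal_bij_betw[OF stable_normal_Vser]
      lcs_semidirect derived_series_semidirect_subset
    unfolding n by auto
qed

end
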